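(* There is an absolute constant $C$ such that for every $n\geq 1$, every $w\in\{0,1\}^n$, and every nonempty set $\mathcal{B}\subseteq\{0,1\}^n\setminus\{w\}$, there is a first-order sentence over $\tau_{\mathsf{string}}$ with at most $\log_2(n)+\log_2|\mathcal{B}|+C$ quantifiers that is true in $\mathbf{B}_w$ and false in $\mathbf{B}_{w'}$ for every $w'\in\mathcal{B}$.
   Context: Vocabulary $\tau_{\mathsf{string}}=\langle <, S;\ \mathsf{min},\mathsf{max}\rangle$ with $<$ binary, $S$ unary, $\mathsf{min},\mathsf{max}$ constants. A string $w=w_1\cdots w_n\in\{0,1\}^n$ ($n\geq 1$) is encoded by the structure $\mathbf{B}_w$ with universe $\{1,\dots,n\}$, $<$ the usual order, $S=\{i: w_i=1\}$, $\mathsf{min}=1$, $\mathsf{max}=n$. The number of quantifiers is the number of quantifier occurrences. *)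

theory Defs
  imports Complex_Main
begin

datatype tm = Var nat | Cmin | Cmax

datatype fo =
    FTrue
  | FFalse
  | Eq tm tm
  | Less tm tm
  | Sym tm
  | Neg fo
  | Conj fo fo
  | Disj fo fo
  | Impl fo fo
  | Exi nat fo
  | Alli nat fo

fun tm_vars :: "tm \<Rightarrow> nat set" where
  "tm_vars (Var i) = {i}"
| "tm_vars Cmin = {}"
| "tm_vars Cmax = {}"

fun free_vars :: "fo \<Rightarrow> nat set" where
  "free_vars FTrue = {}"
| "free_vars FFalse = {}"
| "free_vars (Eq s t) = tm_vars s \<union> tm_vars t"
| "free_vars (Less s t) = tm_vars s \<union> tm_vars t"
| "free_vars (Sym t) = tm_vars t"
| "free_vars (Neg p) = free_vars p"
| "free_vars (Conj p q) = free_vars p \<union> free_vars q"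
| "free_vars (Disj p q) = free_vars p \<union> free_vars q"
| "free_vars (Impl p q) = free_vars p \<union> free_vars q"
| "free_vars (Exi x p) = free_vars p - {x}"
| "free_vars (Alli x p) = free_vars p - {x}"

definition sentence :: "fo \<Rightarrow> bool" where
  "sentence p \<longleftrightarrow> free_vars p = {}"

fun nquant :: "fo \<Rightarrow> nat" where
  "nquant FTrue = 0"
| "nquant FFalse = 0"
| "nquant (Eq s t) = 0"
| "nquant (Less s t) = 0"
| "nquant (Sym t) = 0"
| "nquant (Neg p) = nquant p"
| "nquant (Conj p q) = nquant p + nquant q"
| "nquant (Disj p q) = nquant p + nquant q"
| "nquant (Impl p q) = nquant p + nquant q"
| "nquant (Exi x p) = Suc (nquant p)"
| "nquant (Alli x p) = Suc (nquant p)"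

text \<open>The structure B_w for a word w = w_1...w_n (list, w_i = w ! (i-1), True = 1):
  universe {1..n}, usual order, S = {i. w_i = 1}, min = 1, max = n.\<close>

fun tm_eval :: "bool list \<Rightarrow> (nat \<Rightarrow> nat) \<Rightarrow> tm \<Rightarrow> nat" where
  "tm_eval w \<sigma> (Var i) = \<sigma> i"
| "tm_eval w \<sigma> Cmin = 1"
| "tm_eval w \<sigma> Cmax = length w"

fun sat :: "bool list \<Rightarrow> (nat \<Rightarrow> nat) \<Rightarrow> fo \<Rightarrow> bool" where
  "sat w \<sigma> FTrue = True"
| "sat w \<sigma> FFalse = False"
| "sat w \<sigma> (Eq s t) = (tm_eval w \<sigma> s = tm_eval w \<sigma> t)"
| "sat w \<sigma> (Less s t) = (tm_eval w \<sigma> s < tm_eval w \<sigma> t)"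
| "sat w \<sigma> (Sym t) = (w ! (tm_eval w \<sigma> t - 1))"
| "sat w \<sigma> (Neg p) = (\<not> sat w \<sigma> p)"
| "sat w \<sigma> (Conj p q) = (sat w \<sigma> p \<and> sat w \<sigma> q)"
| "sat w \<sigma> (Disj p q) = (sat w \<sigma> p \<or> sat w \<sigma> q)"
| "sat w \<sigma> (Impl p q) = (sat w \<sigma> p \<longrightarrow> sat w \<sigma> q)"
| "sat w \<sigma> (Exi x p) = (\<exists>a\<in>{1..length w}. sat w (\<sigma>(x := a)) p)"
| "sat w \<sigma> (Alli x p) = (\<forall>a\<in>{1..length w}. sat w (\<sigma>(x := a)) p)"

text \<open>Truth of a sentence in B_w (the assignment is irrelevant for sentences;
  we use the constant assignment to the element 1).\<close>
definition models :: "bool list \<Rightarrow> fo \<Rightarrow> bool" where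
  "models w p \<longleftrightarrow> sat w (\<lambda>_. 1) p"

end

theory Submission
  imports Defs
begin

text \<open>For the i-th word of B fix a position p i at which it differs from w. The sentence
  says: for every position x and every tuple y_0, ..., y_(K-1) that encodes an index i in binary
  (bit t set iff y_t = min), if x is position p i + 1 then its letter is that of w. It holds in w,
  and fails in the i-th word of B for x = p i + 1 and the tuple encoding i; the index costs
  K \<approx> log |B| quantifiers.

  "x is position p + 1" is expressed with k \<approx> log n quantifiers by halving distances: a gap
  is at least S iff it cannot be split into two gaps below roughly S/2, and below T iff it cannot
  be split into two gaps of at least roughly T/2. These formulas have the same quantifier
  structure for every p, so the case distinction over the index can be merged branch by branch
  along this common structure, and all cases share the same k quantifiers. In total the sentence
  has 1 + K + k \<le> log n + log |B| + 5 quantifiers.\<close>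

lemma tm_eval_cong: "(\<forall>i\<in>tm_vars t. \<sigma> i = \<sigma>' i) \<Longrightarrow> tm_eval w \<sigma> t = tm_eval w \<sigma>' t"
  by (cases t) auto

lemma tm_eval_upd_fresh: "k \<notin> tm_vars t \<Longrightarrow> tm_eval w (\<sigma>(k := c)) t = tm_eval w \<sigma> t"
  by (cases t) auto

lemma tm_eval_in_universe:
  "\<forall>i. \<sigma> i \<in> {1..length w} \<Longrightarrow> tm_eval w \<sigma> t \<in> {1..length w}"
  by (cases t) force+

lemma sat_cong: "(\<forall>i\<in>free_vars \<phi>. \<sigma> i = \<sigma>' i) \<Longrightarrow> sat w \<sigma> \<phi> = sat w \<sigma>' \<phi>"
proof (induction \<phi> arbitrary: \<sigma> \<sigma>')
  case (Exi x p)
  have "sat w (\<sigma>(x := a)) p = sat w (\<sigma>'(x := a)) p" for a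
    by (rule Exi.IH) (use Exi.prems in auto)
  then show ?case by simp
next
  case (Alli x p)
  have "sat w (\<sigma>(x := a)) p = sat w (\<sigma>'(x := a)) p" for a
    by (rule Alli.IH) (use Alli.prems in auto)
  then show ?case by simp
qed (simp_all only: sat.simps free_vars.simps ball_Un; metis tm_eval_cong)+

section \<open>Conditionals that share quantifiers\<close>

fun bound_vars :: "fo \<Rightarrow> nat set" where
  "bound_vars (Neg p) = bound_vars p"
| "bound_vars (Conj p q) = bound_vars p \<union> bound_vars q"
| "bound_vars (Disj p q) = bound_vars p \<union> bound_vars q"
| "bound_vars (Impl p q) = bound_vars p \<union> bound_vars q"
| "bound_vars (Exi x p) = insert x (bound_vars p)"
| "bound_vars (Alli x p) = insert x (bound_vars p)"
| "bound_vars _ = {}"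

lemma bound_vars_if_nquant_0: "nquant p = 0 \<Longrightarrow> bound_vars p = {}"
  by (induction p) auto

definition cond_fo :: "fo \<Rightarrow> fo \<Rightarrow> fo \<Rightarrow> fo" where
  "cond_fo g p q = Disj (Conj g p) (Conj (Neg g) q)"

(* If g then p else q, sharing the quantifiers of p and q wherever their shapes agree. *)
fun merge_cond :: "fo \<Rightarrow> fo \<Rightarrow> fo \<Rightarrow> fo" where
  "merge_cond g (Neg p) (Neg q) = Neg (merge_cond g p q)"
| "merge_cond g (Conj p1 p2) (Conj q1 q2) = Conj (merge_cond g p1 q1) (merge_cond g p2 q2)"
| "merge_cond g (Exi x p) (Exi y q) =
     (if x = y then Exi x (merge_cond g p q) else cond_fo g (Exi x p) (Exi y q))"
| "merge_cond g p q = cond_fo g p q"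

lemma sat_merge_cond:
  "bound_vars p \<inter> free_vars g = {} \<Longrightarrow>
   sat w \<sigma> (merge_cond g p q) \<longleftrightarrow> (if sat w \<sigma> g then sat w \<sigma> p else sat w \<sigma> q)"
proof (induction g p q arbitrary: \<sigma> rule: merge_cond.induct)
  case (3 g x p y q)
  have "sat w (\<sigma>(x := a)) g = sat w \<sigma> g" for a
    using "3.prems" by (intro sat_cong) auto
  with 3 show ?case by (auto simp: cond_fo_def)
qed (auto simp: cond_fo_def Int_Un_distrib2)

lemma free_vars_merge_cond: "free_vars (merge_cond g p q) \<subseteq> free_vars g \<union> free_vars p \<union> free_vars q"
  by (induction g p q rule: merge_cond.induct) (auto simp: cond_fo_def)

lemma bound_vars_merge_cond: "bound_vars (merge_cond g p q) \<subseteq> bound_vars g \<union> bound_vars p \<union> bound_vars q"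
  by (induction g p q rule: merge_cond.induct) (auto simp: cond_fo_def)

fun skeletal :: "fo \<Rightarrow> bool" where
  "skeletal (Neg p) = skeletal p"
| "skeletal (Conj p q) = (skeletal p \<and> skeletal q)"
| "skeletal (Exi x p) = skeletal p"
| "skeletal p = (nquant p = 0)"

(* Quantifier-free subformulas collapse to FTrue, so they never prevent merging. *)
fun skeleton :: "fo \<Rightarrow> fo" where
  "skeleton (Neg p) = (if nquant p = 0 then FTrue else Neg (skeleton p))"
| "skeleton (Conj p q) = (if nquant p + nquant q = 0 then FTrue else Conj (skeleton p) (skeleton q))"
| "skeleton (Exi x p) = Exi x (skeleton p)"
| "skeleton p = FTrue"

lemma skeletal_if_nquant_0: "nquant p = 0 \<Longrightarrow> skeletal p"
  by (induction p) auto

lemma skeleton_eq_FTrue_iff: "skeletal p \<Longrightarrow> skeleton p = FTrue \<longleftrightarrow> nquant p = 0"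
  by (induction p) auto

lemma skeleton_if_nquant_0: "nquant p = 0 \<Longrightarrow> skeleton p = FTrue"
  using skeleton_eq_FTrue_iff skeletal_if_nquant_0 by blast

lemma nquant_skeleton: "skeletal p \<Longrightarrow> nquant (skeleton p) = nquant p"
  by (induction p) auto

lemma nquant_merge_cond_0:
  "nquant g = 0 \<Longrightarrow> nquant p = 0 \<Longrightarrow> nquant q = 0 \<Longrightarrow> nquant (merge_cond g p q) = 0"
  by (induction g p q rule: merge_cond.induct) (auto simp: cond_fo_def)

lemma skeleton_merge_cond:
  assumes "skeletal p" "skeletal q" "skeleton p = skeleton q" "nquant g = 0"
  shows "skeletal (merge_cond g p q) \<and> skeleton (merge_cond g p q) = skeleton p"
  using assms
proof (induction g p q rule: merge_cond.induct)
  case (1 g p q)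
  show ?case
  proof (cases "nquant p = 0")
    case True
    then have "nquant q = 0"
      using "1.prems" skeleton_eq_FTrue_iff by (auto split: if_splits)
    with True "1.prems" show ?thesis
      using nquant_merge_cond_0 skeletal_if_nquant_0 by auto
  next
    case False
    then have "skeleton p = skeleton q"
      using "1.prems" skeleton_eq_FTrue_iff by (auto split: if_splits)
    with "1.prems" "1.IH" have m: "skeletal (merge_cond g p q)" "skeleton (merge_cond g p q) = skeleton p"
      by auto
    then have "nquant (merge_cond g p q) = nquant p"
      using "1.prems"(1) nquant_skeleton by (metis skeletal.simps(1))
    with m False show ?thesis by simp
  qed
next
  case (2 g p1 p2 q1 q2)
  then have "skeleton p1 = skeleton q1" "skeleton p2 = skeleton q2"
    by (auto simp: skeleton_if_nquant_0 split: if_splits)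
  with "2.prems" have "skeletal (merge_cond g p1 q1) \<and> skeleton (merge_cond g p1 q1) = skeleton p1"
    and "skeletal (merge_cond g p2 q2) \<and> skeleton (merge_cond g p2 q2) = skeleton p2"
    by (simp_all add: "2.IH")
  moreover from this have "nquant (merge_cond g p1 q1) = nquant p1" "nquant (merge_cond g p2 q2) = nquant p2"
    using "2.prems"(1) nquant_skeleton by (metis skeletal.simps(2))+
  ultimately show ?case using "2.prems"(1) by simp
qed (auto simp: cond_fo_def skeleton_if_nquant_0 split: if_splits, (metis skeleton_eq_FTrue_iff)+)

definition cases_fo :: "('a \<Rightarrow> fo) \<Rightarrow> ('a \<Rightarrow> fo) \<Rightarrow> 'a list \<Rightarrow> fo \<Rightarrow> fo" where
  "cases_fo g th is d = foldr (\<lambda>i. merge_cond (g i) (th i)) is d"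

lemma sat_cases_fo_all:
  "\<forall>i\<in>set is. bound_vars (th i) \<inter> free_vars (g i) = {} \<Longrightarrow> \<forall>i\<in>set is. sat w \<sigma> (th i) \<Longrightarrow>
   sat w \<sigma> d \<Longrightarrow> sat w \<sigma> (cases_fo g th is d)"
  by (induction "is") (auto simp: cases_fo_def sat_merge_cond)

lemma sat_cases_fo_select:
  assumes "\<forall>i\<in>set is. bound_vars (th i) \<inter> free_vars (g i) = {}" "j \<in> set is"
    and "\<forall>i\<in>set is. sat w \<sigma> (g i) \<longleftrightarrow> i = j"
  shows "sat w \<sigma> (cases_fo g th is d) \<longleftrightarrow> sat w \<sigma> (th j)"
  using assms by (induction "is") (auto simp: cases_fo_def sat_merge_cond)

lemma free_vars_cases_fo:
  "free_vars (cases_fo g th is d) \<subseteq> free_vars d \<union> (\<Union>i\<in>set is. free_vars (g i) \<union> free_vars (th i))"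
  using free_vars_merge_cond by (induction "is") (simp_all add: cases_fo_def, blast)

lemma skeleton_cases_fo:
  assumes "\<forall>i\<in>set is. skeletal (th i) \<and> skeleton (th i) = skeleton d \<and> nquant (g i) = 0" "skeletal d"
  shows "skeletal (cases_fo g th is d) \<and> skeleton (cases_fo g th is d) = skeleton d"
  using assms skeleton_merge_cond by (induction "is") (simp_all add: cases_fo_def)

definition alls :: "nat list \<Rightarrow> fo \<Rightarrow> fo" where
  "alls xs \<phi> = foldr Alli xs \<phi>"

lemma nquant_alls: "nquant (alls xs \<phi>) = length xs + nquant \<phi>"
  by (induction xs) (auto simp: alls_def)

lemma free_vars_alls: "free_vars (alls xs \<phi>) = free_vars \<phi> - set xs"
  by (induction xs) (auto simp: alls_def)

lemma sat_alls:
  "sat w \<sigma> (alls xs \<phi>) \<longleftrightarrow>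
   (\<forall>\<sigma>'. (\<forall>i. i \<notin> set xs \<longrightarrow> \<sigma>' i = \<sigma> i) \<longrightarrow> (\<forall>i\<in>set xs. \<sigma>' i \<in> {1..length w}) \<longrightarrow> sat w \<sigma>' \<phi>)"
proof (induction xs arbitrary: \<sigma>)
  case Nil
  then show ?case by (auto simp: alls_def)
next
  case (Cons x xs)
  show ?case
  proof
    assume all: "sat w \<sigma> (alls (x # xs) \<phi>)"
    show "\<forall>\<sigma>'. (\<forall>i. i \<notin> set (x # xs) \<longrightarrow> \<sigma>' i = \<sigma> i) \<longrightarrow> (\<forall>i\<in>set (x # xs). \<sigma>' i \<in> {1..length w}) \<longrightarrow> sat w \<sigma>' \<phi>"
    proof (intro allI impI)
      fix \<sigma>' assume agree: "\<forall>i. i \<notin> set (x # xs) \<longrightarrow> \<sigma>' i = \<sigma> i"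
        and range: "\<forall>i\<in>set (x # xs). \<sigma>' i \<in> {1..length w}"
      then have "sat w (\<sigma>(x := \<sigma>' x)) (alls xs \<phi>)"
        using all by (simp add: alls_def)
      then show "sat w \<sigma>' \<phi>"
        using Cons.IH agree range by auto
    qed
  next
    assume all: "\<forall>\<sigma>'. (\<forall>i. i \<notin> set (x # xs) \<longrightarrow> \<sigma>' i = \<sigma> i) \<longrightarrow> (\<forall>i\<in>set (x # xs). \<sigma>' i \<in> {1..length w}) \<longrightarrow> sat w \<sigma>' \<phi>"
    have "sat w (\<sigma>(x := a)) (alls xs \<phi>)" if a: "a \<in> {1..length w}" for a
    proof -
      have "sat w \<sigma>' \<phi>" if "\<forall>i. i \<notin> set xs \<longrightarrow> \<sigma>' i = (\<sigma>(x := a)) i"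
        and "\<forall>i\<in>set xs. \<sigma>' i \<in> {1..length w}" for \<sigma>'
      proof -
        have "\<forall>i. i \<notin> set (x # xs) \<longrightarrow> \<sigma>' i = \<sigma> i" using that(1) by auto
        moreover have "\<forall>i\<in>set (x # xs). \<sigma>' i \<in> {1..length w}"
          using that a by (cases "x \<in> set xs") auto
        ultimately show ?thesis using all by blast
      qed
      then show ?thesis by (simp add: Cons.IH)
    qed
    then show "sat w \<sigma> (alls (x # xs) \<phi>)" by (simp add: alls_def)
  qed
qed

lemma models_alls:
  assumes "free_vars \<phi> \<subseteq> set xs" "1 \<le> length w"
  shows "models w (alls xs \<phi>) \<longleftrightarrow> (\<forall>\<sigma>. (\<forall>i. \<sigma> i \<in> {1..length w}) \<longrightarrow> sat w \<sigma> \<phi>)"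
proof
  assume all: "models w (alls xs \<phi>)"
  show "\<forall>\<sigma>. (\<forall>i. \<sigma> i \<in> {1..length w}) \<longrightarrow> sat w \<sigma> \<phi>"
  proof (intro allI impI)
    fix \<sigma> :: "nat \<Rightarrow> nat" assume "\<forall>i. \<sigma> i \<in> {1..length w}"
    then have "sat w (\<lambda>i. if i \<in> set xs then \<sigma> i else 1) \<phi>"
      using all[unfolded models_def sat_alls, rule_format, of "\<lambda>i. if i \<in> set xs then \<sigma> i else 1"]
      by simp
    moreover have "sat w \<sigma> \<phi> = sat w (\<lambda>i. if i \<in> set xs then \<sigma> i else 1) \<phi>"
      by (rule sat_cong) (use assms(1) in auto)
    ultimately show "sat w \<sigma> \<phi>" by simp
  qed
next
  assume all: "\<forall>\<sigma>. (\<forall>i. \<sigma> i \<in> {1..length w}) \<longrightarrow> sat w \<sigma> \<phi>"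
  show "models w (alls xs \<phi>)"
    unfolding models_def sat_alls
  proof (intro allI impI)
    fix \<sigma> :: "nat \<Rightarrow> nat"
    assume "\<forall>i. i \<notin> set xs \<longrightarrow> \<sigma> i = 1" "\<forall>i\<in>set xs. \<sigma> i \<in> {1..length w}"
    then have "\<sigma> i \<in> {1..length w}" for i
      using assms(2) by (cases "i \<in> set xs") auto
    then show "sat w \<sigma> \<phi>" using all by blast
  qed
qed

section \<open>Distances between positions\<close>

definition le_fo :: "tm \<Rightarrow> tm \<Rightarrow> fo" where
  "le_fo s t = Neg (Less t s)"

lemma sat_le_fo [simp]: "sat w \<sigma> (le_fo s t) \<longleftrightarrow> tm_eval w \<sigma> s \<le> tm_eval w \<sigma> t"
  by (simp add: le_fo_def not_less)

lemma nquant_le_fo [simp]: "nquant (le_fo s t) = 0"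
  by (simp add: le_fo_def)

lemma free_vars_le_fo [simp]: "free_vars (le_fo s t) = tm_vars s \<union> tm_vars t"
  by (auto simp: le_fo_def)

fun dist_rel :: "bool \<Rightarrow> nat \<Rightarrow> nat \<Rightarrow> nat \<Rightarrow> nat \<Rightarrow> nat \<Rightarrow> bool" where
  "dist_rel True S1 S2 a x b \<longleftrightarrow> a \<le> x \<and> x \<le> b \<and> S1 \<le> x - a \<and> S2 \<le> b - x"
| "dist_rel False T1 T2 a x b \<longleftrightarrow> 0 < T1 \<and> 0 < T2 \<and> a \<le> x \<and> x \<le> b \<and> x - a < T1 \<and> b - x < T2"

fun dist_guard :: "bool \<Rightarrow> nat \<Rightarrow> nat \<Rightarrow> nat \<Rightarrow> nat \<Rightarrow> nat \<Rightarrow> bool" where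
  "dist_guard True S1 S2 a x b \<longleftrightarrow> a \<le> x \<and> x \<le> b \<and> (0 < S1 \<longrightarrow> a < x) \<and> (0 < S2 \<longrightarrow> x < b)"
| "dist_guard False T1 T2 a x b \<longleftrightarrow> 0 < T1 \<and> 0 < T2 \<and> a \<le> x \<and> x \<le> b"

fun split_lo :: "bool \<Rightarrow> nat \<Rightarrow> nat" where
  "split_lo True S = (S + 2) div 2"
| "split_lo False T = (T + 1) div 2"

fun split_hi :: "bool \<Rightarrow> nat \<Rightarrow> nat" where
  "split_hi True S = (S + 1) div 2"
| "split_hi False T = T div 2"

lemma ex_near_split_left_iff:
  assumes "1 \<le> a" "x \<le> n"
  shows "(\<exists>c\<in>{1..n}. c \<le> x \<and> dist_rel False (split_lo True S) (split_hi True S) a c x) \<longleftrightarrow>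
    a \<le> x \<and> x - a < S"
proof
  assume gap: "a \<le> x \<and> x - a < S"
  define c where "c = max a (x + 1 - (S + 1) div 2)"
  have "c \<le> x \<and> dist_rel False (split_lo True S) (split_hi True S) a c x"
    using gap by (auto simp: c_def max_def; presburger)
  moreover have "c \<in> {1..n}" using assms gap by (auto simp: c_def)
  ultimately show "\<exists>c\<in>{1..n}. c \<le> x \<and> dist_rel False (split_lo True S) (split_hi True S) a c x"
    by blast
qed (auto; presburger)

lemma ex_near_split_right_iff:
  assumes "b \<le> n"
  shows "(\<exists>c\<in>{1..n}. x < c \<and> dist_rel False (split_lo True S) (split_hi True S) x c b) \<longleftrightarrow>
    x < b \<and> b - x < S"
proof
  assume gap: "x < b \<and> b - x < S"
  define c where "c = max (x + 1) (b + 1 - (S + 1) div 2)"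
  have "x < c \<and> dist_rel False (split_lo True S) (split_hi True S) x c b"
    using gap by (auto simp: c_def max_def; presburger)
  moreover have "c \<in> {1..n}" using assms gap by (auto simp: c_def)
  ultimately show "\<exists>c\<in>{1..n}. x < c \<and> dist_rel False (split_lo True S) (split_hi True S) x c b"
    by blast
qed (auto; presburger)

lemma ex_far_split_left_iff:
  assumes "1 \<le> a" "x \<le> n"
  shows "(\<exists>c\<in>{1..n}. c \<le> x \<and> dist_rel True (split_lo False T) (split_hi False T) a c x) \<longleftrightarrow>
    a \<le> x \<and> T \<le> x - a"
proof
  assume gap: "a \<le> x \<and> T \<le> x - a"
  define c where "c = a + (T + 1) div 2"
  have "c \<le> x \<and> dist_rel True (split_lo False T) (split_hi False T) a c x"
    using gap by (auto simp: c_def)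
  moreover have "c \<in> {1..n}" using assms gap by (auto simp: c_def)
  ultimately show "\<exists>c\<in>{1..n}. c \<le> x \<and> dist_rel True (split_lo False T) (split_hi False T) a c x"
    by blast
qed auto

lemma ex_far_split_right_iff:
  assumes "b \<le> n"
  shows "(\<exists>c\<in>{1..n}. x < c \<and> dist_rel True (split_lo False T) (split_hi False T) x c b) \<longleftrightarrow>
    x < b \<and> T \<le> b - x"
proof
  assume gap: "x < b \<and> T \<le> b - x"
  define c where "c = x + max 1 ((T + 1) div 2)"
  have "x < c \<and> dist_rel True (split_lo False T) (split_hi False T) x c b"
    using gap by (auto simp: c_def max_def)
  moreover have "c \<in> {1..n}" using assms gap by (auto simp: c_def max_def)
  ultimately show "\<exists>c\<in>{1..n}. x < c \<and> dist_rel True (split_lo False T) (split_hi False T) x c b"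
    by blast
qed auto

lemma dist_rel_step:
  assumes "1 \<le> a" "b \<le> n"
  shows "dist_rel f S1 S2 a x b \<longleftrightarrow> dist_guard f S1 S2 a x b \<and>
    \<not> (\<exists>c\<in>{1..n}. if c \<le> x then dist_rel (\<not> f) (split_lo f S1) (split_hi f S1) a c x
                   else dist_rel (\<not> f) (split_lo f S2) (split_hi f S2) x c b)"
    (is "_ \<longleftrightarrow> _ \<and> \<not> ?covered")
proof (cases "a \<le> x \<and> x \<le> b")
  case inside: True
  then have "x \<le> n" using assms by simp
  have covered: "?covered \<longleftrightarrow>
      (\<exists>c\<in>{1..n}. c \<le> x \<and> dist_rel (\<not> f) (split_lo f S1) (split_hi f S1) a c x) \<or>
      (\<exists>c\<in>{1..n}. x < c \<and> dist_rel (\<not> f) (split_lo f S2) (split_hi f S2) x c b)"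
    by (simp add: if_bool_eq_disj bex_disj_distrib not_le)
  show ?thesis
  proof (cases f)
    case True
    with covered have "?covered \<longleftrightarrow> x - a < S1 \<or> (x < b \<and> b - x < S2)"
      using inside ex_near_split_left_iff[OF assms(1) \<open>x \<le> n\<close>, of S1] ex_near_split_right_iff[OF assms(2), of x S2]
      by simp
    with True inside show ?thesis by auto
  next
    case False
    with covered have "?covered \<longleftrightarrow> S1 \<le> x - a \<or> (x < b \<and> S2 \<le> b - x)"
      using inside ex_far_split_left_iff[OF assms(1) \<open>x \<le> n\<close>, of S1] ex_far_split_right_iff[OF assms(2), of x S2]
      by simp
    with False inside show ?thesis by auto
  qed
next
  case False
  then show ?thesis by (cases f) auto
qed

fun dist_guard_fo :: "bool \<Rightarrow> nat \<Rightarrow> nat \<Rightarrow> tm \<Rightarrow> tm \<Rightarrow> tm \<Rightarrow> fo" where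
  "dist_guard_fo True S1 S2 a x b = Conj (le_fo a x) (Conj (le_fo x b)
     (Conj (if 0 < S1 then Less a x else FTrue) (if 0 < S2 then Less x b else FTrue)))"
| "dist_guard_fo False T1 T2 a x b =
     (if 0 < T1 \<and> 0 < T2 then Conj (le_fo a x) (le_fo x b) else FFalse)"

fun dist_base_fo :: "bool \<Rightarrow> nat \<Rightarrow> nat \<Rightarrow> tm \<Rightarrow> tm \<Rightarrow> tm \<Rightarrow> fo" where
  "dist_base_fo True S1 S2 a x b = dist_guard_fo True S1 S2 a x b"
| "dist_base_fo False T1 T2 a x b = (if 0 < T1 \<and> 0 < T2 then Conj (Eq a x) (Eq x b) else FFalse)"

(* A gap is at least S iff no split point cuts it into
   two gaps below split_lo S and split_hi S, which sum to S + 1, and it is below T iff no split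
   point cuts it into two gaps of at least split_lo T and split_hi T, which sum to T. *)
fun dist_fo :: "bool \<Rightarrow> nat \<Rightarrow> nat \<Rightarrow> nat \<Rightarrow> tm \<Rightarrow> tm \<Rightarrow> tm \<Rightarrow> fo" where
  "dist_fo f 0 S1 S2 a x b = dist_base_fo f S1 S2 a x b"
| "dist_fo f (Suc k) S1 S2 a x b = Conj (dist_guard_fo f S1 S2 a x b)
     (Neg (Exi k (merge_cond (le_fo (Var k) x)
        (dist_fo (\<not> f) k (split_lo f S1) (split_hi f S1) a (Var k) x)
        (dist_fo (\<not> f) k (split_lo f S2) (split_hi f S2) x (Var k) b))))"

fun dist_cap :: "bool \<Rightarrow> nat \<Rightarrow> nat" where
  "dist_cap f 0 = 1"
| "dist_cap True (Suc k) = 2 * dist_cap False k - 1"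
| "dist_cap False (Suc k) = 2 * dist_cap True k"

fun dist_skeleton :: "nat \<Rightarrow> fo" where
  "dist_skeleton 0 = FTrue"
| "dist_skeleton (Suc k) = Conj FTrue (Neg (Exi k (dist_skeleton k)))"

lemma nquant_dist_guard_fo [simp]: "nquant (dist_guard_fo f S1 S2 a x b) = 0"
  by (cases f) auto

lemma nquant_dist_base_fo [simp]: "nquant (dist_base_fo f S1 S2 a x b) = 0"
  by (cases f) auto

lemma free_vars_dist_guard_fo: "free_vars (dist_guard_fo f S1 S2 a x b) \<subseteq> tm_vars a \<union> tm_vars x \<union> tm_vars b"
  by (cases f) auto

lemma free_vars_dist_base_fo: "free_vars (dist_base_fo f S1 S2 a x b) \<subseteq> tm_vars a \<union> tm_vars x \<union> tm_vars b"
  by (cases f) (auto simp: free_vars_dist_guard_fo)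

lemma sat_dist_guard_fo:
  "sat w \<sigma> (dist_guard_fo f S1 S2 a x b) \<longleftrightarrow>
   dist_guard f S1 S2 (tm_eval w \<sigma> a) (tm_eval w \<sigma> x) (tm_eval w \<sigma> b)"
  by (cases f) auto

lemma sat_dist_base_fo:
  "S1 \<le> 1 \<Longrightarrow> S2 \<le> 1 \<Longrightarrow> sat w \<sigma> (dist_base_fo f S1 S2 a x b) \<longleftrightarrow>
   dist_rel f S1 S2 (tm_eval w \<sigma> a) (tm_eval w \<sigma> x) (tm_eval w \<sigma> b)"
  by (cases f) auto

lemma dist_cap_pos: "0 < dist_cap f k"
  by (induction f k rule: dist_cap.induct) auto

lemma split_le_dist_cap:
  "S \<le> dist_cap f (Suc k) \<Longrightarrow> split_lo f S \<le> dist_cap (\<not> f) k \<and> split_hi f S \<le> dist_cap (\<not> f) k"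
  using dist_cap_pos[of "\<not> f" k] by (cases f) auto

lemma nquant_dist_skeleton: "nquant (dist_skeleton k) = k"
  by (induction k) auto

lemma skeleton_dist_fo:
  "skeletal (dist_fo f k S1 S2 a x b) \<and> skeleton (dist_fo f k S1 S2 a x b) = dist_skeleton k"
proof (induction k arbitrary: f S1 S2 a x b)
  case 0
  then show ?case by (simp add: skeletal_if_nquant_0 skeleton_if_nquant_0)
next
  case (Suc k)
  let ?m = "merge_cond (le_fo (Var k) x)
    (dist_fo (\<not> f) k (split_lo f S1) (split_hi f S1) a (Var k) x)
    (dist_fo (\<not> f) k (split_lo f S2) (split_hi f S2) x (Var k) b)"
  have m: "skeletal ?m" "skeleton ?m = dist_skeleton k"
    using skeleton_merge_cond Suc.IH by (metis nquant_le_fo)+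
  then have "nquant ?m = k"
    using nquant_skeleton nquant_dist_skeleton by metis
  with m show ?case
    by (simp add: skeletal_if_nquant_0 skeleton_if_nquant_0)
qed

lemma nquant_dist_fo: "nquant (dist_fo f k S1 S2 a x b) = k"
  using skeleton_dist_fo nquant_skeleton nquant_dist_skeleton by metis

lemma bound_vars_dist_fo: "bound_vars (dist_fo f k S1 S2 a x b) \<subseteq> {..<k}"
proof (induction k arbitrary: f S1 S2 a x b)
  case (Suc k)
  let ?A = "dist_fo (\<not> f) k (split_lo f S1) (split_hi f S1) a (Var k) x"
  let ?B = "dist_fo (\<not> f) k (split_lo f S2) (split_hi f S2) x (Var k) b"
  have "bound_vars (merge_cond (le_fo (Var k) x) ?A ?B) \<subseteq> {..<k}"
    using bound_vars_merge_cond[of "le_fo (Var k) x" ?A ?B] Suc.IH bound_vars_if_nquant_0 by fastforce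
  then show ?case
    using bound_vars_if_nquant_0[of "dist_guard_fo f S1 S2 a x b"] by auto
qed (simp add: bound_vars_if_nquant_0)

lemma free_vars_dist_fo:
  "free_vars (dist_fo f k S1 S2 a x b) \<subseteq> tm_vars a \<union> tm_vars x \<union> tm_vars b"
proof (induction k arbitrary: f S1 S2 a x b)
  case 0
  then show ?case by (simp add: free_vars_dist_base_fo)
next
  case (Suc k)
  let ?A = "dist_fo (\<not> f) k (split_lo f S1) (split_hi f S1) a (Var k) x"
  let ?B = "dist_fo (\<not> f) k (split_lo f S2) (split_hi f S2) x (Var k) b"
  have "free_vars (merge_cond (le_fo (Var k) x) ?A ?B) \<subseteq> insert k (tm_vars a \<union> tm_vars x \<union> tm_vars b)"
    using free_vars_merge_cond[of "le_fo (Var k) x" ?A ?B] Suc.IH[of "\<not> f" _ _ a "Var k" x]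
      Suc.IH[of "\<not> f" _ _ x "Var k" b] by fastforce
  then show ?case
    using free_vars_dist_guard_fo[of f S1 S2 a x b] by auto
qed

lemma sat_dist_fo:
  assumes "\<forall>i. \<sigma> i \<in> {1..length w}" "tm_vars a \<union> tm_vars x \<union> tm_vars b \<subseteq> {k..}"
    and "S1 \<le> dist_cap f k" "S2 \<le> dist_cap f k"
  shows "sat w \<sigma> (dist_fo f k S1 S2 a x b) \<longleftrightarrow>
    dist_rel f S1 S2 (tm_eval w \<sigma> a) (tm_eval w \<sigma> x) (tm_eval w \<sigma> b)"
  using assms
proof (induction k arbitrary: f \<sigma> S1 S2 a x b)
  case 0
  then show ?case by (simp add: sat_dist_base_fo)
next
  case (Suc k)
  let ?n = "length w" and ?g = "le_fo (Var k) x"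
  let ?ea = "tm_eval w \<sigma> a" and ?ex = "tm_eval w \<sigma> x" and ?eb = "tm_eval w \<sigma> b"
  let ?A = "dist_fo (\<not> f) k (split_lo f S1) (split_hi f S1) a (Var k) x"
  let ?B = "dist_fo (\<not> f) k (split_lo f S2) (split_hi f S2) x (Var k) b"
  have upd: "tm_eval w (\<sigma>(k := c)) t = tm_eval w \<sigma> t" if "t \<in> {a, x, b}" for c t
    using Suc.prems(2) that by (intro tm_eval_upd_fresh) auto
  have caps: "split_lo f S1 \<le> dist_cap (\<not> f) k" "split_hi f S1 \<le> dist_cap (\<not> f) k"
    "split_lo f S2 \<le> dist_cap (\<not> f) k" "split_hi f S2 \<le> dist_cap (\<not> f) k"
    using split_le_dist_cap Suc.prems(3,4) by blast+
  have merged: "sat w (\<sigma>(k := c)) (merge_cond ?g ?A ?B) \<longleftrightarrow>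
      (if c \<le> ?ex then dist_rel (\<not> f) (split_lo f S1) (split_hi f S1) ?ea c ?ex
       else dist_rel (\<not> f) (split_lo f S2) (split_hi f S2) ?ex c ?eb)"
    if "c \<in> {1..?n}" for c
  proof -
    have range: "\<forall>i. (\<sigma>(k := c)) i \<in> {1..?n}" using Suc.prems(1) that by simp
    have "tm_vars a \<union> tm_vars (Var k) \<union> tm_vars x \<subseteq> {k..}"
      and "tm_vars x \<union> tm_vars (Var k) \<union> tm_vars b \<subseteq> {k..}"
      using Suc.prems(2) by auto
    from Suc.IH[OF range this(1) caps(1,2)] Suc.IH[OF range this(2) caps(3,4)]
    have "sat w (\<sigma>(k := c)) ?A \<longleftrightarrow> dist_rel (\<not> f) (split_lo f S1) (split_hi f S1) ?ea c ?ex"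
      and "sat w (\<sigma>(k := c)) ?B \<longleftrightarrow> dist_rel (\<not> f) (split_lo f S2) (split_hi f S2) ?ex c ?eb"
      by (simp_all only: upd[of a c] upd[of x c] upd[of b c] insert_iff tm_eval.simps fun_upd_same simp_thms)
    moreover have "bound_vars ?A \<inter> free_vars ?g = {}"
      using bound_vars_dist_fo Suc.prems(2) by fastforce
    ultimately show ?thesis
      using upd by (simp add: sat_merge_cond)
  qed
  have "sat w \<sigma> (dist_fo f (Suc k) S1 S2 a x b) \<longleftrightarrow> dist_guard f S1 S2 ?ea ?ex ?eb \<and>
      \<not> (\<exists>c\<in>{1..?n}. if c \<le> ?ex then dist_rel (\<not> f) (split_lo f S1) (split_hi f S1) ?ea c ?ex
                      else dist_rel (\<not> f) (split_lo f S2) (split_hi f S2) ?ex c ?eb)"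
    using merged by (simp add: sat_dist_guard_fo)
  also have "\<dots> \<longleftrightarrow> dist_rel f S1 S2 ?ea ?ex ?eb"
    using tm_eval_in_universe[OF Suc.prems(1)] by (intro dist_rel_step[symmetric]) auto
  finally show ?case .
qed

section \<open>The distinguishing sentence\<close>

(* Var k is position p + 1, i.e. has p positions before it and n - 1 - p after it. *)
definition position_fo :: "nat \<Rightarrow> nat \<Rightarrow> nat \<Rightarrow> fo" where
  "position_fo k n p = dist_fo True k p (n - Suc p) Cmin (Var k) Cmax"

lemma sat_position_fo:
  assumes "\<forall>i. \<sigma> i \<in> {1..length u}" "p < length u" "length u \<le> dist_cap True k"
  shows "sat u \<sigma> (position_fo k (length u) p) \<longleftrightarrow> \<sigma> k = Suc p"
proof -
  have "sat u \<sigma> (position_fo k (length u) p) \<longleftrightarrow> dist_rel True p (length u - Suc p) 1 (\<sigma> k) (length u)"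
    unfolding position_fo_def using assms by (subst sat_dist_fo) auto
  also have "\<dots> \<longleftrightarrow> \<sigma> k = Suc p"
    using assms(1)[rule_format, of k] assms(2) by auto
  finally show ?thesis .
qed

definition letter_check_fo :: "nat \<Rightarrow> nat \<Rightarrow> nat \<Rightarrow> bool \<Rightarrow> fo" where
  "letter_check_fo k n p b =
     Neg (Conj (position_fo k n p) (if b then Neg (Sym (Var k)) else Sym (Var k)))"

lemma sat_letter_check_fo:
  assumes "\<forall>i. \<sigma> i \<in> {1..length u}" "p < length u" "length u \<le> dist_cap True k"
  shows "sat u \<sigma> (letter_check_fo k (length u) p b) \<longleftrightarrow> (\<sigma> k = Suc p \<longrightarrow> u ! p = b)"
  using sat_position_fo[OF assms] by (auto simp: letter_check_fo_def)

lemma skeleton_letter_check_fo: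
  "skeletal (letter_check_fo k n p b) \<and>
   skeleton (letter_check_fo k n p b) = skeleton (letter_check_fo k n' p' b')"
  using skeleton_dist_fo[of True k] nquant_dist_fo[of True k]
  by (simp add: letter_check_fo_def position_fo_def)

lemma nquant_letter_check_fo: "nquant (letter_check_fo k n p b) = k"
  by (simp add: letter_check_fo_def position_fo_def nquant_dist_fo)

lemma bound_vars_letter_check_fo: "bound_vars (letter_check_fo k n p b) \<subseteq> {..<k}"
  using bound_vars_dist_fo by (simp add: letter_check_fo_def position_fo_def)

lemma free_vars_letter_check_fo: "free_vars (letter_check_fo k n p b) \<subseteq> {k}"
  using free_vars_dist_fo[of True k p "n - Suc p" Cmin "Var k" Cmax]
  by (auto simp: letter_check_fo_def position_fo_def)

fun index_fo :: "(nat \<Rightarrow> nat) \<Rightarrow> nat \<Rightarrow> nat \<Rightarrow> fo" where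
  "index_fo y 0 i = FTrue"
| "index_fo y (Suc K) i = Conj (index_fo y K i)
     (if bit i K then Eq (Var (y K)) Cmin else Neg (Eq (Var (y K)) Cmin))"

lemma sat_index_fo: "sat w \<sigma> (index_fo y K i) \<longleftrightarrow> (\<forall>t<K. bit i t \<longleftrightarrow> \<sigma> (y t) = 1)"
  by (induction K) (auto simp: less_Suc_eq)

lemma nquant_index_fo: "nquant (index_fo y K i) = 0"
  by (induction K) auto

lemma free_vars_index_fo: "free_vars (index_fo y K i) \<subseteq> y ` {..<K}"
  by (induction K) auto

lemma eq_if_low_bits_eq:
  fixes i j :: nat
  assumes "i < 2 ^ K" "j < 2 ^ K" "\<forall>t<K. bit i t \<longleftrightarrow> bit j t"
  shows "i = j"
proof -
  have "take_bit K i = take_bit K j"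
    using assms(3) by (auto simp: bit_eq_iff bit_take_bit_iff)
  then show ?thesis
    using assms(1,2) by (simp add: take_bit_nat_eq_self)
qed

(* Indices outside [0..<m] fall through to a check that holds in w as well. *)
definition selector_fo :: "nat \<Rightarrow> nat \<Rightarrow> nat \<Rightarrow> (nat \<Rightarrow> nat) \<Rightarrow> bool list \<Rightarrow> fo" where
  "selector_fo K k m p w =
     cases_fo (index_fo (\<lambda>t. Suc (k + t)) K) (\<lambda>i. letter_check_fo k (length w) (p i) (w ! p i))
       [0..<m] (letter_check_fo k (length w) 0 (w ! 0))"

definition distinguishing_fo :: "nat \<Rightarrow> nat \<Rightarrow> nat \<Rightarrow> (nat \<Rightarrow> nat) \<Rightarrow> bool list \<Rightarrow> fo" where
  "distinguishing_fo K k m p w = alls (k # map (\<lambda>t. Suc (k + t)) [0..<K]) (selector_fo K k m p w)"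

lemma selector_fo_fresh:
  "\<forall>i\<in>set is. bound_vars (letter_check_fo k n (p i) (w ! p i)) \<inter> free_vars (index_fo (\<lambda>t. Suc (k + t)) K i) = {}"
proof
  fix i
  have "free_vars (index_fo (\<lambda>t. Suc (k + t)) K i) \<subseteq> {Suc k..}"
    using free_vars_index_fo[of "\<lambda>t. Suc (k + t)" K i] by auto
  moreover have "{..<k} \<inter> {Suc k..} = {}" by auto
  ultimately show "bound_vars (letter_check_fo k n (p i) (w ! p i)) \<inter> free_vars (index_fo (\<lambda>t. Suc (k + t)) K i) = {}"
    using bound_vars_letter_check_fo[of k n "p i" "w ! p i"] by blast
qed

lemma free_vars_selector_fo:
  "free_vars (selector_fo K k m p w) \<subseteq> set (k # map (\<lambda>t. Suc (k + t)) [0..<K])"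
proof -
  have "free_vars (index_fo (\<lambda>t. Suc (k + t)) K i) \<union> free_vars (letter_check_fo k n q b)
      \<subseteq> set (k # map (\<lambda>t. Suc (k + t)) [0..<K])" for i n q b
    using free_vars_index_fo[of "\<lambda>t. Suc (k + t)" K i] free_vars_letter_check_fo[of k n q b] by auto
  then show ?thesis
    unfolding selector_fo_def by - (rule order_trans[OF free_vars_cases_fo], blast)
qed

lemma nquant_selector_fo: "nquant (selector_fo K k m p w) = k"
proof -
  let ?d = "letter_check_fo k (length w) 0 (w ! 0)"
  have "skeletal (selector_fo K k m p w) \<and> skeleton (selector_fo K k m p w) = skeleton ?d"
    unfolding selector_fo_def
    by (rule skeleton_cases_fo) (simp_all add: skeleton_letter_check_fo nquant_index_fo)
  then show ?thesis
    using nquant_skeleton skeleton_letter_check_fo nquant_letter_check_fo by metis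
qed

lemma sentence_distinguishing_fo: "sentence (distinguishing_fo K k m p w)"
  using free_vars_selector_fo by (simp add: sentence_def distinguishing_fo_def free_vars_alls)

lemma nquant_distinguishing_fo: "nquant (distinguishing_fo K k m p w) = Suc (K + k)"
  by (simp add: distinguishing_fo_def nquant_alls nquant_selector_fo)

lemma models_distinguishing_fo:
  assumes "1 \<le> length w" "length w \<le> dist_cap True k" "\<forall>i<m. p i < length w"
  shows "models w (distinguishing_fo K k m p w)"
  unfolding distinguishing_fo_def
proof (subst models_alls[OF free_vars_selector_fo assms(1)], intro allI impI)
  fix \<sigma> :: "nat \<Rightarrow> nat" assume "\<forall>i. \<sigma> i \<in> {1..length w}"
  moreover have "0 < length w" using assms(1) by linarith
  ultimately show "sat w \<sigma> (selector_fo K k m p w)"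
    using assms
    unfolding selector_fo_def
    by (intro sat_cases_fo_all selector_fo_fresh) (auto simp: sat_letter_check_fo)
qed

lemma not_models_distinguishing_fo:
  assumes "length u = length w" "length w \<le> dist_cap True k" "0 < K \<Longrightarrow> 2 \<le> length w"
    and "m \<le> 2 ^ K" "j < m" "\<forall>i<m. p i < length w" "u ! p j \<noteq> w ! p j"
  shows "\<not> models u (distinguishing_fo K k m p w)"
proof -
  let ?n = "length w"
  (* Bits are encoded by min = 1 versus max = n, which is why n \<ge> 2 is needed once K > 0. *)
  define \<sigma> where "\<sigma> v = (if v = k then Suc (p j)
      else if k < v \<and> v \<le> k + K then (if bit j (v - Suc k) then 1 else ?n) else 1)" for v
  have range: "\<forall>v. \<sigma> v \<in> {1..length u}"
    using assms(1,5,6) by (auto simp: \<sigma>_def Suc_le_eq)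
  have index: "sat u \<sigma> (index_fo (\<lambda>t. Suc (k + t)) K i) \<longleftrightarrow> i = j" if "i \<in> set [0..<m]" for i
  proof -
    have "sat u \<sigma> (index_fo (\<lambda>t. Suc (k + t)) K i) \<longleftrightarrow> (\<forall>t<K. bit i t \<longleftrightarrow> bit j t)"
      using assms(3) by (auto simp: sat_index_fo \<sigma>_def)
    also have "\<dots> \<longleftrightarrow> i = j"
      using that assms(4,5) eq_if_low_bits_eq[of i K j] by auto
    finally show ?thesis .
  qed
  have "sat u \<sigma> (selector_fo K k m p w) \<longleftrightarrow> sat u \<sigma> (letter_check_fo k (length u) (p j) (w ! p j))"
    unfolding selector_fo_def assms(1)[symmetric]
    by (rule sat_cases_fo_select[OF selector_fo_fresh]) (use assms(5) index in auto)
  moreover have "\<not> sat u \<sigma> (letter_check_fo k (length u) (p j) (w ! p j))"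
    using assms by (subst sat_letter_check_fo[OF range]) (auto simp: \<sigma>_def)
  moreover have "1 \<le> length u" using assms(1,5,6) by fastforce
  ultimately show ?thesis
    unfolding distinguishing_fo_def using range models_alls[OF free_vars_selector_fo] by blast
qed

section \<open>Counting quantifiers\<close>

lemma ex_power_bracket:
  fixes m b :: nat
  assumes "0 < m" "1 < b"
  obtains K where "m \<le> b ^ K" "b ^ K < b * m"
proof -
  define K where "K = (LEAST K. m \<le> b ^ K)"
  have "m \<le> b ^ m"
    using less_exp[of m] power_mono[of 2 b m] assms(2) by linarith
  then have le: "m \<le> b ^ K"
    unfolding K_def by (rule LeastI)
  have "b ^ K < b * m"
  proof (cases K)
    case 0
    have "b \<le> b * m" using assms(1) by simp
    from less_le_trans[OF assms(2) this] 0 show ?thesis by simp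
  next
    case (Suc K')
    then have "b ^ K' < m"
      using not_less_Least[of K' "\<lambda>K. m \<le> b ^ K"] K_def by auto
    then show ?thesis using Suc assms(2) by simp
  qed
  with le show ?thesis by (rule that)
qed

lemma pow4_lt_dist_cap: "4 ^ j < 2 * dist_cap True (2 * j)"
proof (induction j)
  case (Suc j)
  have "dist_cap True (2 * Suc j) = 4 * dist_cap True (2 * j) - 1"
    by (simp add: numeral_eq_Suc)
  with Suc show ?case by simp
qed simp

lemma quantifier_budget:
  assumes "1 \<le> n" "1 \<le> m"
  obtains K k where "m \<le> 2 ^ K" "0 < K \<Longrightarrow> 2 \<le> m" "n \<le> dist_cap True k"
    and "real (Suc (K + k)) < log 2 (real n) + log 2 (real m) + 5"
proof -
  obtain K where K: "m \<le> 2 ^ K" "2 ^ K < 2 * m"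
    using ex_power_bracket[of m 2] assms(2) by auto
  obtain J where J: "2 * n \<le> 4 ^ J" "4 ^ J < 4 * (2 * n)"
    using ex_power_bracket[of "2 * n" 4] assms(1) by auto
  have "2 \<le> m" if "0 < K"
  proof -
    have "2 \<le> (2::nat) ^ K" using that by (cases K) auto
    with K(2) show ?thesis by linarith
  qed
  moreover have "n \<le> dist_cap True (2 * J)"
    using J(1) pow4_lt_dist_cap[of J] by linarith
  moreover have "real K < log 2 (real (2 * m))"
    using K(2) by (intro less_log2_of_power) simp
  moreover have "(2::nat) ^ (2 * J) < 8 * n"
    using J(2) by (simp add: power_mult)
  then have "real (2 * J) < log 2 (real (8 * n))"
    by (rule less_log2_of_power)
  moreover have "log 2 (real (2 * m)) = 1 + log 2 (real m)" "log 2 (real (8 * n)) = 3 + log 2 (real n)"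
    using assms log_pow_cancel[of 2 3] by (simp_all add: log_mult)
  ultimately show ?thesis
    using that[OF K(1)] by simp
qed

lemma finite_card_less_words:
  assumes "B \<subseteq> {v :: bool list. length v = n} - {w}" "length w = n"
  shows "finite B" "card B < 2 ^ n"
proof -
  have words: "finite {v :: bool list. length v = n}" "card {v :: bool list. length v = n} = 2 ^ n"
    using finite_lists_length_eq[of "UNIV :: bool set" n] card_lists_length_eq[of "UNIV :: bool set" n]
    by simp_all
  then show "finite B"
    using assms(1) finite_subset by blast
  have "card B \<le> card ({v :: bool list. length v = n} - {w})"
    using assms(1) words(1) by (intro card_mono) auto
  also have "\<dots> < 2 ^ n"
    using words assms(2) by (simp add: card_Diff_singleton)
  finally show "card B < 2 ^ n" .
qed

lemma enumerate_differing_positions: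
  assumes "finite B" "B \<subseteq> {v. length v = length w} - {w}"
  obtains bs p where "set bs = B" "length bs = card B"
    and "\<forall>i<length bs. p i < length w \<and> bs ! i ! p i \<noteq> w ! p i"
proof -
  obtain bs where bs: "set bs = B" "distinct bs"
    using finite_distinct_list[OF assms(1)] by blast
  have "\<exists>q<length w. bs ! i ! q \<noteq> w ! q" if "i < length bs" for i
  proof -
    have "bs ! i \<in> B" using bs(1) that by auto
    with assms(2) have "length (bs ! i) = length w" "bs ! i \<noteq> w" by auto
    then show ?thesis by (metis nth_equalityI)
  qed
  then obtain p where "\<forall>i<length bs. p i < length w \<and> bs ! i ! p i \<noteq> w ! p i"
    by metis
  with bs show ?thesis using that distinct_card by metis
qed

lemma distinguishing_sentence:
  assumes "1 \<le> length w" "finite B" "B \<subseteq> {v. length v = length w} - {w}"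
    and "card B \<le> 2 ^ K" "0 < K \<Longrightarrow> 2 \<le> length w" "length w \<le> dist_cap True k"
  shows "\<exists>\<phi>. sentence \<phi> \<and> nquant \<phi> = Suc (K + k) \<and> models w \<phi> \<and> (\<forall>w'\<in>B. \<not> models w' \<phi>)"
proof -
  obtain bs p where bs: "set bs = B" "length bs = card B"
    and p: "\<forall>i<length bs. p i < length w \<and> bs ! i ! p i \<noteq> w ! p i"
    using enumerate_differing_positions[OF assms(2,3)] by blast
  let ?\<phi> = "distinguishing_fo K k (card B) p w"
  have "\<not> models w' ?\<phi>" if "w' \<in> B" for w'
  proof -
    from that bs(1) obtain j where j: "j < length bs" "w' = bs ! j"
      by (auto simp: in_set_conv_nth)
    have "length w' = length w" using that assms(3) by auto
    with assms(4-6) p bs(2) j show ?thesis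
      by (intro not_models_distinguishing_fo) auto
  qed
  moreover have "models w ?\<phi>"
    using assms(1,6) p bs(2) by (intro models_distinguishing_fo) auto
  ultimately show ?thesis
    using sentence_distinguishing_fo nquant_distinguishing_fo by blast
qed

theorem mainTheorem11:
  shows "\<exists>C::real. \<forall>n::nat. n \<ge> 1 \<longrightarrow>
     (\<forall>w::bool list. length w = n \<longrightarrow>
       (\<forall>B::bool list set. B \<noteq> {} \<longrightarrow> B \<subseteq> {v. length v = n} - {w} \<longrightarrow>
          (\<exists>\<phi>. sentence \<phi> \<and>
               real (nquant \<phi>) \<le> log 2 (real n) + log 2 (real (card B)) + C \<and>
               models w \<phi> \<and> (\<forall>w'\<in>B. \<not> models w' \<phi>))))"
proof (intro exI[of _ 5] allI impI)
  fix n w and B :: "bool list set"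
  assume n: "1 \<le> n" and w: "length w = n" and B: "B \<noteq> {}" "B \<subseteq> {v. length v = n} - {w}"
  note words = finite_card_less_words[OF B(2) w]
  have "1 \<le> card B" using B(1) words(1) by (simp add: Suc_le_eq card_gt_0_iff)
  then obtain K k where K: "card B \<le> 2 ^ K" "0 < K \<Longrightarrow> 2 \<le> card B" and k: "n \<le> dist_cap True k"
    and budget: "real (Suc (K + k)) < log 2 n + log 2 (card B) + 5"
    using quantifier_budget[OF n] by blast
  have long: "2 \<le> n" if "0 < K"
  proof -
    have "(2::nat) ^ 1 < 2 ^ n" using K(2)[OF that] words(2) by simp
    then show ?thesis by (subst (asm) power_strict_increasing_iff) auto
  qed
  show "\<exists>\<phi>. sentence \<phi> \<and> real (nquant \<phi>) \<le> log 2 (real n) + log 2 (real (card B)) + 5 \<and>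
      models w \<phi> \<and> (\<forall>w'\<in>B. \<not> models w' \<phi>)"
    using distinguishing_sentence[of w B K k] n w B(2) words(1) K(1) long k budget by fastforce
qed

end
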